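(* Let $\Gamma$ be a chain of loops: vertices $w_0,\dots,w_r$ where consecutive vertices $w_{j-1},w_j$ are joined by two parallel edges of equal length, so that the $j$-th loop has length $\lambda_j$. Suppose the distinct loop lengths occurring are $L_1,\dots,L_m$, with $L_i$ occurring $n_i$ times, and let $L=\sum_j\lambda_j$ be the total length. Then the eigenfrequencies $k$ (eigenvalues $k^2$) of $\mathbf{L}(\Gamma)$ with standard vertex conditions are: $0$ with multiplicity one; $2\pi N/L$ with multiplicity one for each positive integer $N$; and $2\pi N/L_i$ with multiplicity $n_i$ for each $i$ and each positive integer $N$ (multiplicities adding when these values coincide). Equivalently the secular equation is $\Sigma(k)=\left(-1+e^{ikL}\right)\prod_{i=1}^m\left(-1+e^{iL_ik}\right)^{n_i}$. In particular the spectrum does not depend on the order of the loops in the chain. *)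

theory Defs
  imports "HOL-Analysis.Analysis" "HOL-Library.Function_Algebras"
begin

text \<open>Loop j (1 <= j <= r) joins the vertices
  w_(j-1) and w_j by two parallel edges (j,False) and (j,True), each of length
  lam j / 2, so that the j-th loop has total length lam j.  Each edge (j,s) is
  parametrised by x in [0, lam j / 2], with x = 0 at w_(j-1) and x = lam j / 2 at w_j.
  A function on the graph is a map u :: (nat * bool) => real => real, required to
  vanish outside the edges of the graph.\<close>

type_synonym graph_fun = "nat \<times> bool \<Rightarrow> real \<Rightarrow> real"

definition edge_len :: "(nat \<Rightarrow> real) \<Rightarrow> nat \<Rightarrow> real" where
  "edge_len lam j = lam j / 2"

definition edge_solution :: "real \<Rightarrow> real \<Rightarrow> (real \<Rightarrow> real) \<Rightarrow> (real \<Rightarrow> real) \<Rightarrow> bool" where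
  "edge_solution mu l f f' \<longleftrightarrow>
     (\<forall>x\<in>{0..l}. (f has_real_derivative f' x) (at x within {0..l}) \<and>
                 (f' has_real_derivative (- mu * f x)) (at x within {0..l}))"

definition chain_eigenfunction :: "nat \<Rightarrow> (nat \<Rightarrow> real) \<Rightarrow> real \<Rightarrow> graph_fun \<Rightarrow> bool" where
  "chain_eigenfunction r lam mu u \<longleftrightarrow>
     (\<forall>j s x. (j \<notin> {1..r} \<or> x \<notin> {0..edge_len lam j}) \<longrightarrow> u (j,s) x = 0) \<and>
     (\<exists>du :: graph_fun.
        (\<forall>j\<in>{1..r}. \<forall>s. edge_solution mu (edge_len lam j) (u (j,s)) (du (j,s))) \<and>
        \<comment> \<open>continuity: a common value phi v at every vertex w_v\<close>
        (\<exists>phi :: nat \<Rightarrow> real. \<forall>j\<in>{1..r}. \<forall>s.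
            u (j,s) 0 = phi (j - 1) \<and> u (j,s) (edge_len lam j) = phi j) \<and>
        \<comment> \<open>Kirchhoff: sum of outgoing derivatives vanishes at every vertex\<close>
        (\<forall>v\<in>{0..r}. (\<Sum>j\<in>{1..r}. \<Sum>s\<in>(UNIV::bool set).
            (if j - 1 = v then du (j,s) 0 else 0)
          - (if j = v then du (j,s) (edge_len lam j) else 0)) = 0))"

definition gf_scale :: "real \<Rightarrow> graph_fun \<Rightarrow> graph_fun" where
  "gf_scale c u = (\<lambda>e x. c * u e x)"

definition eigenspace_chain :: "nat \<Rightarrow> (nat \<Rightarrow> real) \<Rightarrow> real \<Rightarrow> graph_fun set" where
  "eigenspace_chain r lam mu = {u. chain_eigenfunction r lam mu u}"

definition multiplicity_chain :: "nat \<Rightarrow> (nat \<Rightarrow> real) \<Rightarrow> real \<Rightarrow> nat" where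
  "multiplicity_chain r lam mu = vector_space.dim gf_scale (eigenspace_chain r lam mu)"

end

(*
  On each edge an eigenfunction is a combination of the fundamental solutions cos_mu and sin_mu
  of -f'' = mu f.  On loop j, the half-difference of the functions on its two parallel edges
  vanishes at both vertices and cancels in both Kirchhoff sums, so it is an independent mode,
  present exactly when sin_mu mu (lam j / 2) = 0.  The mean of the two edges is continuous and has
  continuous derivative across every vertex, so it glues to one solution c * cos_mu mu along the
  whole chain, of length L / 2, and the Kirchhoff condition at the last vertex demands
  mu * c * sin_mu mu (L / 2) = 0.  These modes form a basis of the eigenspace.  For mu > 0 the two
  conditions read sqrt mu = 2 pi N / L and sqrt mu = 2 pi N / lam j; for mu <= 0 only the constant
  survives, and only when mu = 0.
*)

theory Submission
  imports Defs
begin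

lemma card_filter_eq_sum_fibres:
  assumes "finite A"
  shows "card {j\<in>A. P (g j)} = (\<Sum>y\<in>g ` A. card {j\<in>A. g j = y} * (if P y then 1 else 0))"
proof -
  have "card {j\<in>A. P (g j)} = (\<Sum>j\<in>A. if P (g j) then 1 else 0)"
    using assms by (simp add: sum.If_cases Int_def conj_commute)
  also have "\<dots> = (\<Sum>y\<in>g ` A. \<Sum>j\<in>{j\<in>A. g j = y}. if P (g j) then 1 else 0)"
    by (rule sum.image_gen[OF assms])
  also have "\<dots> = (\<Sum>y\<in>g ` A. card {j\<in>A. g j = y} * (if P y then 1 else 0))"
  proof (intro sum.cong refl)
    fix y assume "y \<in> g ` A"
    have "(\<Sum>j\<in>{j\<in>A. g j = y}. if P (g j) then 1 else 0)
        = (\<Sum>j\<in>{j\<in>A. g j = y}. if P y then 1 else 0 :: nat)"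
      by (rule sum.cong) auto
    then show "(\<Sum>j\<in>{j\<in>A. g j = y}. if P (g j) then 1 else 0)
        = card {j\<in>A. g j = y} * (if P y then 1 else 0)"
      by simp
  qed
  finally show ?thesis .
qed

lemma (in vector_space) independent_if_biorthogonal:
  fixes v :: "'i \<Rightarrow> 'b" and phi :: "'i \<Rightarrow> 'b \<Rightarrow> 'a"
  assumes fin: "finite I"
    and lin: "\<And>i. i \<in> I \<Longrightarrow> Vector_Spaces.linear scale (*) (phi i)"
    and biorth: "\<And>i k. i \<in> I \<Longrightarrow> k \<in> I \<Longrightarrow> phi i (v k) \<noteq> 0 \<longleftrightarrow> i = k"
  shows "inj_on v I" and "independent (v ` I)"
proof -
  show inj: "inj_on v I"
    using biorth by (metis inj_onI)
  show "independent (v ` I)"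
  proof (rule independent_if_scalars_zero)
    show "finite (v ` I)" using fin by simp
  next
    fix c w assume comb: "(\<Sum>x\<in>v ` I. c x *s x) = 0" and "w \<in> v ` I"
    then obtain i where i: "i \<in> I" and w: "w = v i" by blast
    interpret phi: Vector_Spaces.linear scale "(*)" "phi i" by (rule lin[OF i])
    have "0 = phi i (\<Sum>x\<in>v ` I. c x *s x)" using comb by simp
    also have "\<dots> = (\<Sum>k\<in>I. c (v k) * phi i (v k))"
      by (simp add: phi.sum phi.scale sum.reindex[OF inj])
    also have "\<dots> = (\<Sum>k\<in>I. if k = i then c w * phi i w else 0)"
      using biorth[OF i] w by (intro sum.cong) auto
    also have "\<dots> = c w * phi i w"
      using fin i by simp
    finally show "c w = 0" using biorth[OF i i] w by simp
  qed
qed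

section \<open>Fundamental solutions of the edge equation\<close>

text \<open>The solutions of -f'' = mu f with initial data (f 0, f' 0) = (1, 0) and (0, 1).\<close>

definition cos_mu :: "real \<Rightarrow> real \<Rightarrow> real" where
  "cos_mu mu x = (if mu > 0 then cos (sqrt mu * x) else if mu = 0 then 1 else cosh (sqrt (-mu) * x))"

definition sin_mu :: "real \<Rightarrow> real \<Rightarrow> real" where
  "sin_mu mu x = (if mu > 0 then sin (sqrt mu * x) / sqrt mu else if mu = 0 then x
                  else sinh (sqrt (-mu) * x) / sqrt (-mu))"

lemma cos_mu_0 [simp]: "cos_mu mu 0 = 1"
  by (simp add: cos_mu_def)

lemma sin_mu_0 [simp]: "sin_mu mu 0 = 0"
  by (simp add: sin_mu_def)

lemma real_square_cases:
  fixes mu :: real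
  obtains k where "k > 0" "mu = k\<^sup>2" | "mu = 0" | k where "k > 0" "mu = - k\<^sup>2"
proof (cases mu "0::real" rule: linorder_cases)
  case less
  then show ?thesis using that(3)[of "sqrt (- mu)"] by simp
next
  case greater
  then show ?thesis using that(1)[of "sqrt mu"] by simp
qed (use that in simp)

lemma has_real_derivative_cos_mu:
  "(cos_mu mu has_real_derivative - mu * sin_mu mu x) (at x within S)"
  by (cases mu rule: real_square_cases)
    (auto intro!: derivative_eq_intros simp: cos_mu_def[abs_def] sin_mu_def[abs_def] power2_eq_square)

lemma has_real_derivative_sin_mu:
  "(sin_mu mu has_real_derivative cos_mu mu x) (at x within S)"
  by (cases mu rule: real_square_cases)
    (auto intro!: derivative_eq_intros simp: cos_mu_def[abs_def] sin_mu_def[abs_def])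

lemma cos_mu_add: "cos_mu mu (x + y) = cos_mu mu x * cos_mu mu y - mu * (sin_mu mu x * sin_mu mu y)"
  by (cases mu rule: real_square_cases)
    (auto simp: cos_mu_def sin_mu_def distrib_left cos_add cosh_add power2_eq_square)

lemma sin_mu_add: "sin_mu mu (x + y) = sin_mu mu x * cos_mu mu y + cos_mu mu x * sin_mu mu y"
  by (cases mu rule: real_square_cases)
    (auto simp: cos_mu_def sin_mu_def distrib_left sin_add sinh_add field_simps)

lemma cos_mu_sin_mu_square: "cos_mu mu x * cos_mu mu x + mu * (sin_mu mu x * sin_mu mu x) = 1"
  using cos_mu_add[of mu x "-x"] unfolding cos_mu_def sin_mu_def by auto

lemma sin_mu_nonzero_point:
  assumes "l > 0"
  obtains x where "x \<in> {0..l}" "sin_mu mu x \<noteq> 0"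
proof (cases mu rule: real_square_cases)
  case (1 k)
  define x where "x = min l (pi / (2 * k))"
  have "0 < k * x" using 1 assms by (simp add: x_def)
  moreover have "k * x \<le> pi / 2" using 1 by (simp add: x_def min_mult_distrib_left)
  ultimately have "sin (k * x) > 0" by (intro sin_gt_zero) auto
  moreover have "x \<in> {0..l}" using 1 assms by (simp add: x_def)
  ultimately show ?thesis using 1 that by (simp add: sin_mu_def)
next
  case 2
  then show ?thesis using assms that[of l] by (simp add: sin_mu_def)
next
  case (3 k)
  then have "sinh (k * l) > 0" using assms by simp
  then show ?thesis using 3 assms that[of l] by (simp add: sin_mu_def)
qed

lemma sin_mu_ne_0_if_nonpos: "mu \<le> 0 \<Longrightarrow> x > 0 \<Longrightarrow> sin_mu mu x \<noteq> 0"
  by (cases mu rule: real_square_cases) (auto simp: sin_mu_def)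

lemma sin_mu_half_eq_0_iff:
  assumes "mu > 0" and "a > 0"
  shows "sin_mu mu (a / 2) = 0 \<longleftrightarrow> (\<exists>N::nat. N \<ge> 1 \<and> sqrt mu = 2 * pi * real N / a)"
proof
  assume "sin_mu mu (a / 2) = 0"
  then have "sin (sqrt mu * (a / 2)) = 0" using assms by (simp add: sin_mu_def)
  then obtain i :: int where i: "sqrt mu * (a / 2) = of_int i * pi" using sin_zero_iff_int2 by blast
  have "of_int i * pi > 0" unfolding i[symmetric] using assms by simp
  then have "i > 0" by (simp add: zero_less_mult_iff)
  then show "\<exists>N::nat. N \<ge> 1 \<and> sqrt mu = 2 * pi * real N / a"
    using i assms by (intro exI[of _ "nat i"]) (simp add: field_simps)
next
  assume "\<exists>N::nat. N \<ge> 1 \<and> sqrt mu = 2 * pi * real N / a"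
  then obtain N :: nat where "sqrt mu * (a / 2) = real N * pi" using assms by (auto simp: field_simps)
  then show "sin_mu mu (a / 2) = 0" using assms by (simp add: sin_mu_def sin_npi)
qed

lemma edge_solution_explicit:
  assumes sol: "edge_solution mu l f f'" and x: "x \<in> {0..l}"
  shows "f x = f 0 * cos_mu mu x + f' 0 * sin_mu mu x"
    and "f' x = - mu * f 0 * sin_mu mu x + f' 0 * cos_mu mu x"
proof -
  let ?S = "{0..l}"
  have df: "(f has_real_derivative f' y) (at y within ?S)"
    and df': "(f' has_real_derivative - mu * f y) (at y within ?S)" if "y \<in> ?S" for y
    using sol that unfolding edge_solution_def by auto
  have "\<exists>a. \<forall>y\<in>?S. f y * cos_mu mu y - f' y * sin_mu mu y = a"
  proof (rule has_field_derivative_zero_constant)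
    fix y assume "y \<in> ?S"
    from DERIV_diff[OF DERIV_mult[OF df has_real_derivative_cos_mu[of mu]]
        DERIV_mult[OF df' has_real_derivative_sin_mu[of mu]], OF this this]
    show "((\<lambda>y. f y * cos_mu mu y - f' y * sin_mu mu y) has_real_derivative 0) (at y within ?S)"
      by (simp add: algebra_simps)
  qed simp
  then obtain a where a: "\<And>y. y \<in> ?S \<Longrightarrow> f y * cos_mu mu y - f' y * sin_mu mu y = a" by blast
  have "\<exists>b. \<forall>y\<in>?S. f' y * cos_mu mu y + mu * f y * sin_mu mu y = b"
  proof (rule has_field_derivative_zero_constant)
    fix y assume "y \<in> ?S"
    from DERIV_add[OF DERIV_mult[OF df' has_real_derivative_cos_mu[of mu]]
        DERIV_cmult[where c = mu, OF DERIV_mult[OF df has_real_derivative_sin_mu[of mu]]], OF this this]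
    show "((\<lambda>y. f' y * cos_mu mu y + mu * f y * sin_mu mu y) has_real_derivative 0) (at y within ?S)"
      by (simp add: algebra_simps)
  qed simp
  then obtain b where b: "\<And>y. y \<in> ?S \<Longrightarrow> f' y * cos_mu mu y + mu * f y * sin_mu mu y = b" by blast
  have "0 \<in> ?S" using x by simp
  from a[OF this] a[OF x] b[OF this] b[OF x]
  have ax: "f x * cos_mu mu x - f' x * sin_mu mu x = f 0"
    and bx: "f' x * cos_mu mu x + mu * f x * sin_mu mu x = f' 0" by simp_all
  have one: "cos_mu mu x * cos_mu mu x + mu * (sin_mu mu x * sin_mu mu x) = 1"
    by (rule cos_mu_sin_mu_square)
  \<comment> \<open>the two conserved quantities determine f x and f' x, the system having determinant one\<close>
  have "f x = f x * (cos_mu mu x * cos_mu mu x + mu * (sin_mu mu x * sin_mu mu x))"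
    using one by simp
  also have "\<dots> = (f x * cos_mu mu x - f' x * sin_mu mu x) * cos_mu mu x
      + (f' x * cos_mu mu x + mu * f x * sin_mu mu x) * sin_mu mu x"
    by (simp add: algebra_simps)
  finally show "f x = f 0 * cos_mu mu x + f' 0 * sin_mu mu x" using ax bx by simp
  have "f' x = f' x * (cos_mu mu x * cos_mu mu x + mu * (sin_mu mu x * sin_mu mu x))"
    using one by simp
  also have "\<dots> = - mu * (f x * cos_mu mu x - f' x * sin_mu mu x) * sin_mu mu x
      + (f' x * cos_mu mu x + mu * f x * sin_mu mu x) * cos_mu mu x"
    by (simp add: algebra_simps)
  finally show "f' x = - mu * f 0 * sin_mu mu x + f' 0 * cos_mu mu x" using ax bx by simp
qed

lemma edge_solution_cong:
  assumes sol: "edge_solution mu l f f'" and eq: "\<And>x. x \<in> {0..l} \<Longrightarrow> f x = g x"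
  shows "edge_solution mu l g f'"
  unfolding edge_solution_def
proof (intro ballI conjI)
  fix x assume x: "x \<in> {0..l}"
  have "(f has_real_derivative f' x) (at x within {0..l})"
    and "(f' has_real_derivative - mu * f x) (at x within {0..l})"
    using sol x by (simp_all add: edge_solution_def)
  then show "(g has_real_derivative f' x) (at x within {0..l})"
    and "(f' has_real_derivative - mu * g x) (at x within {0..l})"
    using has_field_derivative_transform_within[OF _ zero_less_one x] eq x by auto
qed

lemma edge_solution_cos_mu_sin_mu:
  "edge_solution mu l (\<lambda>x. a * cos_mu mu (t + x) + b * sin_mu mu x)
     (\<lambda>x. - mu * a * sin_mu mu (t + x) + b * cos_mu mu x)"
  unfolding edge_solution_def
  by (auto intro!: derivative_eq_intros
      DERIV_chain2[OF has_real_derivative_cos_mu[of mu]] DERIV_chain2[OF has_real_derivative_sin_mu]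
      simp: algebra_simps)

section \<open>Eigenfunctions as glued edge solutions\<close>

definition vertex_pos :: "(nat \<Rightarrow> real) \<Rightarrow> nat \<Rightarrow> real" where
  "vertex_pos lam j = (\<Sum>i\<in>{1..j}. edge_len lam i)"

lemma vertex_pos_0 [simp]: "vertex_pos lam 0 = 0"
  by (simp add: vertex_pos_def)

lemma vertex_pos_Suc [simp]: "vertex_pos lam (Suc j) = vertex_pos lam j + edge_len lam (Suc j)"
  by (simp add: vertex_pos_def)

lemma vertex_pos_pred: "1 \<le> j \<Longrightarrow> vertex_pos lam (j - 1) + edge_len lam j = vertex_pos lam j"
  by (cases j) simp_all

definition chain_fun ::
    "nat \<Rightarrow> (nat \<Rightarrow> real) \<Rightarrow> (nat \<Rightarrow> bool \<Rightarrow> real \<Rightarrow> real) \<Rightarrow> graph_fun" where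
  "chain_fun r lam g = (\<lambda>(j, s) x. if j \<in> {1..r} \<and> x \<in> {0..edge_len lam j} then g j s x else 0)"

lemma chain_fun_cong:
  assumes "\<And>j s x. j \<in> {1..r} \<Longrightarrow> x \<in> {0..edge_len lam j} \<Longrightarrow> g j s x = h j s x"
  shows "chain_fun r lam g = chain_fun r lam h"
  using assms by (auto simp: chain_fun_def fun_eq_iff)

lemma kirchhoff_sum_eq:
  fixes X Y :: "nat \<Rightarrow> bool \<Rightarrow> real"
  shows "(\<Sum>j\<in>{1..r}. \<Sum>s\<in>(UNIV::bool set). (if j - 1 = v then X j s else 0) - (if j = v then Y j s else 0))
    = (if v < r then X (v + 1) True + X (v + 1) False else 0)
      - (if 1 \<le> v \<and> v \<le> r then Y v True + Y v False else 0)"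
proof -
  have "(\<Sum>j\<in>{1..r}. \<Sum>s\<in>(UNIV::bool set). (if j - 1 = v then X j s else 0) - (if j = v then Y j s else 0))
     = (\<Sum>j\<in>{1..r}. (if j = v + 1 then X j True + X j False else 0) - (if j = v then Y j True + Y j False else 0))"
    by (intro sum.cong refl) (auto simp: UNIV_bool)
  then show ?thesis by (simp add: sum_subtractf sum.delta')
qed

lemma chain_eigenfunction_chain_funI:
  assumes pos: "\<forall>j\<in>{1..r}. lam j > 0"
    and sol: "\<And>j s. j \<in> {1..r} \<Longrightarrow> edge_solution mu (edge_len lam j) (g j s) (dg j s)"
    and cont: "\<And>j s. j \<in> {1..r} \<Longrightarrow> g j s 0 = phi (j - 1) \<and> g j s (edge_len lam j) = phi j"
    and kirch: "\<And>v. v \<le> r \<Longrightarrow> (if v < r then dg (v + 1) True 0 + dg (v + 1) False 0 else 0)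
        = (if 1 \<le> v then dg v True (edge_len lam v) + dg v False (edge_len lam v) else 0)"
  shows "chain_eigenfunction r lam mu (chain_fun r lam g)"
  unfolding chain_eigenfunction_def
proof (intro conjI exI[of _ "\<lambda>(j, s). dg j s"] exI[of _ phi] ballI allI impI)
  fix j s assume j: "j \<in> {1..r}"
  have "edge_solution mu (edge_len lam j) (chain_fun r lam g (j, s)) (dg j s)"
    using sol[OF j] by (rule edge_solution_cong) (use j in \<open>simp add: chain_fun_def\<close>)
  then show "edge_solution mu (edge_len lam j) (chain_fun r lam g (j, s)) ((\<lambda>(j, s). dg j s) (j, s))"
    by simp
  have "0 \<le> edge_len lam j" using pos j by (simp add: edge_len_def less_imp_le)
  then show "chain_fun r lam g (j, s) 0 = phi (j - 1)" "chain_fun r lam g (j, s) (edge_len lam j) = phi j"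
    using cont[OF j] j by (simp_all add: chain_fun_def)
next
  fix v assume "v \<in> {0..r}"
  then show "(\<Sum>j\<in>{1..r}. \<Sum>s\<in>(UNIV::bool set).
      (if j - 1 = v then (\<lambda>(j, s). dg j s) (j, s) 0 else 0)
    - (if j = v then (\<lambda>(j, s). dg j s) (j, s) (edge_len lam j) else 0)) = 0"
    unfolding prod.case kirchhoff_sum_eq using kirch[of v] by simp
qed (auto simp: chain_fun_def)

lemma chain_eigenfunction_edge_data:
  assumes pos: "\<forall>j\<in>{1..r}. lam j > 0" and u: "chain_eigenfunction r lam mu u"
  obtains phi :: "nat \<Rightarrow> real" and a :: "nat \<Rightarrow> bool \<Rightarrow> real" where
    "u = chain_fun r lam (\<lambda>j s x. phi (j - 1) * cos_mu mu x + a j s * sin_mu mu x)"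
    "\<And>j s. j \<in> {1..r} \<Longrightarrow>
      phi j = phi (j - 1) * cos_mu mu (edge_len lam j) + a j s * sin_mu mu (edge_len lam j)"
    "\<And>v. v \<le> r \<Longrightarrow> (if v < r then a (v + 1) True + a (v + 1) False else 0)
      = (if 1 \<le> v then - 2 * mu * phi (v - 1) * sin_mu mu (edge_len lam v)
                        + (a v True + a v False) * cos_mu mu (edge_len lam v) else 0)"
proof -
  obtain du phi where
    van: "\<forall>j s x. (j \<notin> {1..r} \<or> x \<notin> {0..edge_len lam j}) \<longrightarrow> u (j, s) x = 0" and
    sol: "\<forall>j\<in>{1..r}. \<forall>s. edge_solution mu (edge_len lam j) (u (j, s)) (du (j, s))" and
    cont: "\<forall>j\<in>{1..r}. \<forall>s. u (j, s) 0 = phi (j - 1) \<and> u (j, s) (edge_len lam j) = phi j" and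
    kirch: "\<forall>v\<in>{0..r}. (\<Sum>j\<in>{1..r}. \<Sum>s\<in>(UNIV::bool set).
        (if j - 1 = v then du (j, s) 0 else 0) - (if j = v then du (j, s) (edge_len lam j) else 0)) = 0"
    using u unfolding chain_eigenfunction_def by blast
  define a where "a j s = du (j, s) 0" for j s
  have ends: "edge_len lam j \<in> {0..edge_len lam j}" if "j \<in> {1..r}" for j
    using pos that by (simp add: edge_len_def less_imp_le)
  note explicit = edge_solution_explicit[OF sol[rule_format], of j s x for j s x]
  have val: "u (j, s) x = phi (j - 1) * cos_mu mu x + a j s * sin_mu mu x"
    and slope: "du (j, s) x = - mu * phi (j - 1) * sin_mu mu x + a j s * cos_mu mu x"
    if "j \<in> {1..r}" "x \<in> {0..edge_len lam j}" for j s x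
    using explicit[OF that] cont that(1) by (simp_all add: a_def)
  show ?thesis
  proof
    show "u = chain_fun r lam (\<lambda>j s x. phi (j - 1) * cos_mu mu x + a j s * sin_mu mu x)"
      using van val by (auto simp: chain_fun_def fun_eq_iff)
    show "phi j = phi (j - 1) * cos_mu mu (edge_len lam j) + a j s * sin_mu mu (edge_len lam j)"
      if "j \<in> {1..r}" for j s
      using val[OF that ends[OF that]] cont that by simp
    show "(if v < r then a (v + 1) True + a (v + 1) False else 0)
      = (if 1 \<le> v then - 2 * mu * phi (v - 1) * sin_mu mu (edge_len lam v)
                        + (a v True + a v False) * cos_mu mu (edge_len lam v) else 0)"
      if "v \<le> r" for v
    proof -
      have "du (v, True) (edge_len lam v) + du (v, False) (edge_len lam v)
          = - 2 * mu * phi (v - 1) * sin_mu mu (edge_len lam v)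
            + (a v True + a v False) * cos_mu mu (edge_len lam v)" if "1 \<le> v"
        using slope[OF _ ends, of v True] slope[OF _ ends, of v False] \<open>v \<le> r\<close> that
        by (simp add: algebra_simps)
      then show ?thesis
        using kirch[rule_format, of v] \<open>v \<le> r\<close> unfolding kirchhoff_sum_eq by (auto simp: a_def)
    qed
  qed
qed

lemma transfer_recursion:
  assumes q0: "q 0 = 0"
    and p_step: "\<And>j. j < n \<Longrightarrow>
      p (Suc j) = p j * cos_mu mu (edge_len lam (Suc j)) + q j * sin_mu mu (edge_len lam (Suc j))"
    and q_step: "\<And>j. j < n \<Longrightarrow>
      q (Suc j) = - mu * p j * sin_mu mu (edge_len lam (Suc j)) + q j * cos_mu mu (edge_len lam (Suc j))"
    and "j \<le> n"
  shows "p j = p 0 * cos_mu mu (vertex_pos lam j) \<and> q j = - mu * p 0 * sin_mu mu (vertex_pos lam j)"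
  using \<open>j \<le> n\<close>
proof (induction j)
  case 0
  then show ?case using q0 by simp
next
  case (Suc j)
  then have IH: "p j = p 0 * cos_mu mu (vertex_pos lam j)" "q j = - mu * p 0 * sin_mu mu (vertex_pos lam j)"
    and "j < n" by auto
  then show ?case
    using p_step[of j] q_step[of j]
    by (simp add: cos_mu_add sin_mu_add algebra_simps)
qed

lemma chain_eigenfunction_form:
  assumes r: "r \<ge> 1" and pos: "\<forall>j\<in>{1..r}. lam j > 0" and u: "chain_eigenfunction r lam mu u"
  obtains c :: real and d :: "nat \<Rightarrow> real" where
    "mu * c * sin_mu mu (vertex_pos lam r) = 0"
    "\<And>j. j \<in> {1..r} \<Longrightarrow> d j * sin_mu mu (edge_len lam j) = 0"
    "u = chain_fun r lam (\<lambda>j s x. c * cos_mu mu (vertex_pos lam (j - 1) + x)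
                                  + (if s then d j else - d j) * sin_mu mu x)"
proof -
  obtain phi a where
    u_eq: "u = chain_fun r lam (\<lambda>j s x. phi (j - 1) * cos_mu mu x + a j s * sin_mu mu x)" and
    cont: "\<And>j s. j \<in> {1..r} \<Longrightarrow>
      phi j = phi (j - 1) * cos_mu mu (edge_len lam j) + a j s * sin_mu mu (edge_len lam j)" and
    kirch: "\<And>v. v \<le> r \<Longrightarrow> (if v < r then a (v + 1) True + a (v + 1) False else 0)
      = (if 1 \<le> v then - 2 * mu * phi (v - 1) * sin_mu mu (edge_len lam v)
                        + (a v True + a v False) * cos_mu mu (edge_len lam v) else 0)"
    using chain_eigenfunction_edge_data[OF pos u] by blast
  \<comment> \<open>m j: mean slope leaving w_(j-1) into loop j; q v: mean slope arriving at w_v from loop v\<close>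
  define m where "m j = (a j True + a j False) / 2" for j
  define d where "d j = (a j True - a j False) / 2" for j
  define q where "q v = (if v = 0 then 0 else - mu * phi (v - 1) * sin_mu mu (edge_len lam v)
                                             + m v * cos_mu mu (edge_len lam v))" for v
  have m_q: "m (Suc v) = q v" if "v < r" for v
    using kirch[of v] that by (simp add: m_def q_def algebra_simps)
  have q_r: "q r = 0"
    using kirch[of r] r by (simp add: m_def q_def algebra_simps)
  have p_step: "phi (Suc j) = phi j * cos_mu mu (edge_len lam (Suc j)) + q j * sin_mu mu (edge_len lam (Suc j))"
    if "j < r" for j
  proof -
    let ?c = "cos_mu mu (edge_len lam (Suc j))" and ?s = "sin_mu mu (edge_len lam (Suc j))"
    have "phi (Suc j) = ((phi j * ?c + a (Suc j) True * ?s) + (phi j * ?c + a (Suc j) False * ?s)) / 2"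
      using cont[of "Suc j" True] cont[of "Suc j" False] that by simp
    also have "\<dots> = phi j * ?c + m (Suc j) * ?s"
      by (simp add: m_def field_simps)
    finally show ?thesis using m_q[OF that] by simp
  qed
  have q_step: "q (Suc j) = - mu * phi j * sin_mu mu (edge_len lam (Suc j)) + q j * cos_mu mu (edge_len lam (Suc j))"
    if "j < r" for j
    using m_q[OF that] by (simp add: q_def)
  have vertex: "phi j = phi 0 * cos_mu mu (vertex_pos lam j) \<and> q j = - mu * phi 0 * sin_mu mu (vertex_pos lam j)"
    if "j \<le> r" for j
    by (rule transfer_recursion[where n = r, OF _ p_step q_step that]) (simp add: q_def)
  show ?thesis
  proof
    show "mu * phi 0 * sin_mu mu (vertex_pos lam r) = 0"
      using vertex[of r] q_r by simp
    show "d j * sin_mu mu (edge_len lam j) = 0" if "j \<in> {1..r}" for j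
    proof -
      have "a j True * sin_mu mu (edge_len lam j) = a j False * sin_mu mu (edge_len lam j)"
        using cont[OF that, of True] cont[OF that, of False] by linarith
      then show ?thesis by (simp add: d_def left_diff_distrib)
    qed
    have "phi (j - 1) * cos_mu mu x + a j s * sin_mu mu x
        = phi 0 * cos_mu mu (vertex_pos lam (j - 1) + x) + (if s then d j else - d j) * sin_mu mu x"
      if "j \<in> {1..r}" for j s x
    proof -
      let ?T = "vertex_pos lam (j - 1)" and ?e = "if s then d j else - d j"
      have "a j s = m j + ?e" by (simp add: m_def d_def field_simps)
      also have "m j = q (j - 1)" using m_q[of "j - 1"] that by auto
      also have "q (j - 1) = - mu * phi 0 * sin_mu mu ?T" using vertex[of "j - 1"] that by auto
      finally have a_js: "a j s = - mu * phi 0 * sin_mu mu ?T + ?e" .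
      have phi_j: "phi (j - 1) = phi 0 * cos_mu mu ?T" using vertex[of "j - 1"] that by auto
      show ?thesis unfolding a_js phi_j by (simp add: cos_mu_add algebra_simps)
    qed
    then show "u = chain_fun r lam (\<lambda>j s x. phi 0 * cos_mu mu (vertex_pos lam (j - 1) + x)
                                       + (if s then d j else - d j) * sin_mu mu x)"
      unfolding u_eq by (intro chain_fun_cong) simp
  qed
qed

section \<open>A basis of the eigenspace\<close>

definition eigenmode :: "nat \<Rightarrow> (nat \<Rightarrow> real) \<Rightarrow> real \<Rightarrow> nat option \<Rightarrow> graph_fun" where
  "eigenmode r lam mu k = chain_fun r lam (\<lambda>j s x. case k of
       None \<Rightarrow> cos_mu mu (vertex_pos lam (j - 1) + x)
     | Some i \<Rightarrow> if j = i then (if s then sin_mu mu x else - sin_mu mu x) else 0)"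

lemma chain_eigenfunction_symmetric_mode:
  assumes pos: "\<forall>j\<in>{1..r}. lam j > 0" and end_cond: "mu * sin_mu mu (vertex_pos lam r) = 0"
  shows "chain_eigenfunction r lam mu (eigenmode r lam mu None)"
  unfolding eigenmode_def option.case
proof (rule chain_eigenfunction_chain_funI[OF pos,
    where dg = "\<lambda>j s x. - mu * sin_mu mu (vertex_pos lam (j - 1) + x)"
      and phi = "\<lambda>v. cos_mu mu (vertex_pos lam v)"], goal_cases)
  case (1 j s)
  show ?case
    using edge_solution_cos_mu_sin_mu[of mu "edge_len lam j" 1 "vertex_pos lam (j - 1)" 0] by simp
next
  case (2 j s)
  then show ?case using vertex_pos_pred[of j lam] by simp
next
  case (3 v)
  then show ?case using end_cond vertex_pos_pred[of v lam] by (cases "v = 0") auto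
qed

lemma chain_eigenfunction_loop_mode:
  assumes pos: "\<forall>j\<in>{1..r}. lam j > 0" and dirichlet: "sin_mu mu (edge_len lam i) = 0"
  shows "chain_eigenfunction r lam mu (eigenmode r lam mu (Some i))"
  unfolding eigenmode_def option.case
proof (rule chain_eigenfunction_chain_funI[OF pos,
    where dg = "\<lambda>j s x. if j = i then (if s then cos_mu mu x else - cos_mu mu x) else 0"
      and phi = "\<lambda>v. 0"])
  fix j s
  show "edge_solution mu (edge_len lam j) (\<lambda>x. if j = i then if s then sin_mu mu x else - sin_mu mu x else 0)
      (\<lambda>x. if j = i then if s then cos_mu mu x else - cos_mu mu x else 0)"
  proof -
    have "edge_solution mu (edge_len lam j) (\<lambda>x. c * sin_mu mu x) (\<lambda>x. c * cos_mu mu x)" for c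
      using edge_solution_cos_mu_sin_mu[of mu "edge_len lam j" 0 0 c] by simp
    from this[of 1] this[of "-1"] this[of 0] show ?thesis by (cases "j = i"; cases s) simp_all
  qed
qed (use dirichlet in auto)

interpretation gf: vector_space gf_scale
  by unfold_locales (auto simp: gf_scale_def fun_eq_iff algebra_simps)

lemma gf_scale_chain_fun: "gf_scale c (chain_fun r lam g) = chain_fun r lam (\<lambda>j s x. c * g j s x)"
  by (auto simp: gf_scale_def chain_fun_def fun_eq_iff)

lemma add_chain_fun: "chain_fun r lam g + chain_fun r lam h = chain_fun r lam (\<lambda>j s x. g j s x + h j s x)"
  by (auto simp: chain_fun_def fun_eq_iff)

lemma sum_chain_fun: "(\<Sum>i\<in>A. chain_fun r lam (g i)) = chain_fun r lam (\<lambda>j s x. \<Sum>i\<in>A. g i j s x)"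
  by (induction A rule: infinite_finite_induct) (auto simp: chain_fun_def fun_eq_iff)

definition dirichlet_loops :: "nat \<Rightarrow> (nat \<Rightarrow> real) \<Rightarrow> real \<Rightarrow> nat set" where
  "dirichlet_loops r lam mu = {j\<in>{1..r}. sin_mu mu (edge_len lam j) = 0}"

definition mode_indices :: "nat \<Rightarrow> (nat \<Rightarrow> real) \<Rightarrow> real \<Rightarrow> nat option set" where
  "mode_indices r lam mu = (if mu * sin_mu mu (vertex_pos lam r) = 0 then {None} else {})
     \<union> Some ` dirichlet_loops r lam mu"

lemma None_in_mode_indices [simp]:
  "None \<in> mode_indices r lam mu \<longleftrightarrow> mu * sin_mu mu (vertex_pos lam r) = 0"
  by (simp add: mode_indices_def)

lemma Some_in_mode_indices [simp]: "Some j \<in> mode_indices r lam mu \<longleftrightarrow> j \<in> dirichlet_loops r lam mu"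
  by (auto simp: mode_indices_def)

lemma card_mode_indices:
  "card (mode_indices r lam mu)
     = (if mu * sin_mu mu (vertex_pos lam r) = 0 then 1 else 0) + card (dirichlet_loops r lam mu)"
  by (simp add: mode_indices_def dirichlet_loops_def card_image)

lemma eigenmode_in_eigenspace:
  assumes "\<forall>j\<in>{1..r}. lam j > 0" and "k \<in> mode_indices r lam mu"
  shows "eigenmode r lam mu k \<in> eigenspace_chain r lam mu"
  using assms chain_eigenfunction_symmetric_mode chain_eigenfunction_loop_mode
  by (cases k) (auto simp: eigenspace_chain_def dirichlet_loops_def)

lemma eigenspace_subset_span:
  assumes r: "r \<ge> 1" and pos: "\<forall>j\<in>{1..r}. lam j > 0"
  shows "eigenspace_chain r lam mu \<subseteq> gf.span (eigenmode r lam mu ` mode_indices r lam mu)"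
proof
  fix u assume "u \<in> eigenspace_chain r lam mu"
  then have "chain_eigenfunction r lam mu u" by (simp add: eigenspace_chain_def)
  then obtain c d where
    end_cond: "mu * c * sin_mu mu (vertex_pos lam r) = 0" and
    loop_cond: "\<And>j. j \<in> {1..r} \<Longrightarrow> d j * sin_mu mu (edge_len lam j) = 0" and
    u: "u = chain_fun r lam (\<lambda>j s x. c * cos_mu mu (vertex_pos lam (j - 1) + x)
                                  + (if s then d j else - d j) * sin_mu mu x)"
    using chain_eigenfunction_form[OF r pos] by blast
  let ?span = "gf.span (eigenmode r lam mu ` mode_indices r lam mu)"
  have in_span: "gf_scale a (eigenmode r lam mu k) \<in> ?span"
    if "a = 0 \<or> k \<in> mode_indices r lam mu" for a k
    using that by (auto intro: gf.span_scale gf.span_base gf.span_zero)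
  have "u = gf_scale c (eigenmode r lam mu None) + (\<Sum>i\<in>{1..r}. gf_scale (d i) (eigenmode r lam mu (Some i)))"
    unfolding u eigenmode_def gf_scale_chain_fun sum_chain_fun add_chain_fun option.case
    by (intro chain_fun_cong) (auto simp: if_distrib sum.delta cong: if_cong)
  also have "\<dots> \<in> ?span"
  proof (intro gf.span_add gf.span_sum in_span)
    show "c = 0 \<or> None \<in> mode_indices r lam mu"
      using end_cond by auto
    show "d i = 0 \<or> Some i \<in> mode_indices r lam mu" if "i \<in> {1..r}" for i
      using loop_cond[OF that] that by (auto simp: dirichlet_loops_def)
  qed
  finally show "u \<in> ?span" .
qed

lemma eigenmodes_independent:
  assumes r: "r \<ge> 1" and pos: "\<forall>j\<in>{1..r}. lam j > 0"
  shows "inj_on (eigenmode r lam mu) (mode_indices r lam mu)"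
    and "gf.independent (eigenmode r lam mu ` mode_indices r lam mu)"
proof -
  have "\<exists>x. x \<in> {0..edge_len lam j} \<and> sin_mu mu x \<noteq> 0" if "j \<in> {1..r}" for j
    using pos that sin_mu_nonzero_point[of "edge_len lam j" mu] by (auto simp: edge_len_def)
  then obtain probe where
    probe: "\<And>j. j \<in> {1..r} \<Longrightarrow> probe j \<in> {0..edge_len lam j} \<and> sin_mu mu (probe j) \<noteq> 0"
    by metis
  \<comment> \<open>the value at w_0 detects the symmetric mode; the jump between the two edges of loop j detects
     the mode of loop j\<close>
  define coord where "coord k w = (case k of None \<Rightarrow> w (1, True) 0
                               | Some j \<Rightarrow> w (j, True) (probe j) - w (j, False) (probe j))" for k and w :: graph_fun
  have lin: "Vector_Spaces.linear gf_scale (*) (coord k)" for k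
    unfolding Vector_Spaces.linear_iff coord_def
    by (simp add: gf.vector_space_axioms vector_space_over_itself.vector_space_axioms gf_scale_def
        algebra_simps split: option.split)
  have "0 \<in> {0..edge_len lam 1}" using r pos by (simp add: edge_len_def less_imp_le)
  then have biorth: "coord k (eigenmode r lam mu k') \<noteq> 0 \<longleftrightarrow> k = k'"
    if "k \<in> mode_indices r lam mu" "k' \<in> mode_indices r lam mu" for k k'
    using that r probe by (auto simp: coord_def eigenmode_def chain_fun_def dirichlet_loops_def
        split: option.split)
  have fin: "finite (mode_indices r lam mu)" by (simp add: mode_indices_def dirichlet_loops_def)
  show "inj_on (eigenmode r lam mu) (mode_indices r lam mu)"
    and "gf.independent (eigenmode r lam mu ` mode_indices r lam mu)"
    using gf.independent_if_biorthogonal[OF fin lin biorth] by blast+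
qed

lemma multiplicity_chain_eq_card:
  assumes r: "r \<ge> 1" and pos: "\<forall>j\<in>{1..r}. lam j > 0"
  shows "multiplicity_chain r lam mu = card (mode_indices r lam mu)"
proof -
  let ?B = "eigenmode r lam mu ` mode_indices r lam mu" and ?E = "eigenspace_chain r lam mu"
  have "?B \<subseteq> ?E" using eigenmode_in_eigenspace[OF pos] by blast
  moreover have "?E \<subseteq> gf.span ?B" by (rule eigenspace_subset_span[OF r pos])
  ultimately have "gf.span ?B = gf.span ?E"
    by (metis gf.span_mono gf.span_span subset_antisym)
  then have "gf.dim ?E = card ?B"
    using gf.dim_eq_card eigenmodes_independent(2)[OF r pos] by blast
  also have "\<dots> = card (mode_indices r lam mu)"
    by (rule card_image[OF eigenmodes_independent(1)[OF r pos]])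
  finally show ?thesis by (simp add: multiplicity_chain_def)
qed

theorem mainTheorem6:
  fixes r :: nat and lam :: "nat \<Rightarrow> real" and mu :: real
  assumes "r \<ge> 1"
    and "\<forall>j\<in>{1..r}. lam j > 0"
  defines "L \<equiv> (\<Sum>j\<in>{1..r}. lam j)"
  shows "multiplicity_chain r lam mu =
     (if mu < 0 then 0
      else if mu = 0 then 1
      else (if \<exists>N::nat. N \<ge> 1 \<and> sqrt mu = 2 * pi * real N / L then 1 else 0)
         + (\<Sum>Li\<in>lam ` {1..r}. card {j\<in>{1..r}. lam j = Li} *
              (if \<exists>N::nat. N \<ge> 1 \<and> sqrt mu = 2 * pi * real N / Li then 1 else 0)))"
proof -
  note r = assms(1) and pos = assms(2)
  have L_pos: "L > 0" unfolding L_def using r pos by (intro sum_pos) auto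
  have vertex_pos_r: "vertex_pos lam r = L / 2"
    unfolding vertex_pos_def L_def edge_len_def by (simp add: sum_divide_distrib)
  have mult: "multiplicity_chain r lam mu
      = (if mu * sin_mu mu (L / 2) = 0 then 1 else 0) + card {j\<in>{1..r}. sin_mu mu (lam j / 2) = 0}"
    using multiplicity_chain_eq_card[OF r pos]
    by (simp add: card_mode_indices vertex_pos_r dirichlet_loops_def edge_len_def)
  show ?thesis
  proof (cases "mu > 0")
    case True
    have "{j\<in>{1..r}. sin_mu mu (lam j / 2) = 0}
        = {j\<in>{1..r}. (\<lambda>Li. \<exists>N::nat. N \<ge> 1 \<and> sqrt mu = 2 * pi * real N / Li) (lam j)}"
      using pos sin_mu_half_eq_0_iff[OF True] by auto
    then show ?thesis
      using mult True sin_mu_half_eq_0_iff[OF True L_pos] card_filter_eq_sum_fibres[of "{1..r}"] by simp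
  next
    case False
    then show ?thesis using mult pos L_pos sin_mu_ne_0_if_nonpos[of mu] by auto
  qed
qed

end
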